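(* Let $\omega_N$ be the vorticity of the SV approximation, with arbitrary parameters $\epsilon_N,m_N,a_N>0$. Let $C>0$ be a constant such that $\sum_{0<|k|\le N}|k|^{-2}\le C\log(N)$ for all $N\ge2$ (sum over $k\in\mathbb{Z}^2$). For $\alpha>0$ put \[ \beta_N=\alpha^2+8\epsilon_N^2m_N^2,\qquad \gamma_N=C\log(N). \] Then \[ \|e^{\alpha t|\nabla|}\omega_N(\cdot,t)\|_{L^2}^2\le\frac{\|\omega_N(\cdot,0)\|_{L^2}^2\,e^{\beta_Nt/\epsilon_N}}{1-\frac{\gamma_N\|\omega_N(\cdot,0)\|_{L^2}^2}{\beta_N}\big[e^{\beta_Nt/\epsilon_N}-1\big]} \] for all $0\le t<t^*$, where $t^*=\frac{\epsilon_N}{\beta_N}\log\Big(1+\frac{\beta_N}{\gamma_N\|\omega_N(\cdot,0)\|_{L^2}^2}\Big)$.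
   Context: Let $\mathbb{T}^2=\mathbb{R}^2/(2\pi\mathbb{Z})^2$. For $k=(k_1,k_2)\in\mathbb{Z}^2$ let $|k|$ denote the Euclidean norm and $|k|_\infty=\max(|k_1|,|k_2|)$. Fourier coefficients are $\hat f_k=(2\pi)^{-2}\int_{\mathbb{T}^2}f(x)e^{-ik\cdot x}\,dx$. $P_Nf:=\sum_{|k|_\infty\le N}\hat f_k e^{ik\cdot x}$. Convolution is $(K*f)(x)=\int_{\mathbb{T}^2}K(x-y)f(y)\,dy$, so $\widehat{(K*f)}_k=\widetilde K_k\hat f_k$ with $\widetilde K_k:=\int_{\mathbb{T}^2}K(x)e^{-ik\cdot x}dx$. $|\nabla|$ and $e^{\alpha|\nabla|}$ ($\alpha\in\mathbb{R}$) are the Fourier multipliers with symbols $|k|$ and $e^{\alpha|k|}$. For $v=(v^1,v^2)$, $\mathrm{curl}\,v=\partial_1v^2-\partial_2v^1$. Initial data: $u_0\in L^2(\mathbb{T}^2;\mathbb{R}^2)$ with $\operatorname{div}u_0=0$ in distributions and $\int u_0\,dx=0$; $\omega_0:=\mathrm{curl}\,u_0\in H^{-1}(\mathbb{T}^2)$. SV scheme: for integers $N\ge2$ fix parameters $\epsilon_N>0$, $m_N\ge0$, $1\le a_N\le N$, and: numbers $\hat R_k\in[0,1]$ with $\hat R_k=1$ for $|k|\le m_N$, $\hat R_k=0$ for $|k|>2m_N$; $R_{m_N}$ is the trigonometric polynomial with $\widetilde{(R_{m_N})}_k=\hat R_k$, and $Q_N$ is the Fourier multiplier with symbol $\hat Q_k:=1-\hat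 R_k$; $K_{a_N}$ is a trigonometric polynomial with $\widetilde{(K_{a_N})}_k=0$ unless $|k|_\infty\le a_N$ and $|\widetilde{(K_{a_N})}_k|\le1$. The SV approximation is the trigonometric polynomial field $u_N(x,t)=\sum_{0<|k|_\infty\le N}\hat u_k(t)e^{ik\cdot x}$, $k\cdot\hat u_k=0$, solving $\partial_tu_N+P_N(u_N\cdot\nabla u_N)+\nabla p_N=\epsilon_N\Delta(Q_Nu_N)$, $\operatorname{div}u_N=0$, $u_N(\cdot,0)=K_{a_N}*u_0$. Its vorticity $\omega_N:=\mathrm{curl}\,u_N$ solves $\partial_t\omega_N+P_N(u_N\cdot\nabla\omega_N)=\epsilon_N\Delta(Q_N\omega_N)$, $\omega_N(\cdot,0)=K_{a_N}*\omega_0$. *)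

theory Defs
  imports "HOL-Analysis.Analysis"
begin

text \<open>Lattice points k = (k1,k2) are elements of int \<times> int; points of the torus
 are represented by (x1,x2) :: real \<times> real, with functions on the torus given as
 2 pi-periodic functions; integrals over the torus are integrals over the
 fundamental square with Lebesgue measure.\<close>

definition kinf :: "int \<times> int \<Rightarrow> int" where
  "kinf k = max \<bar>fst k\<bar> \<bar>snd k\<bar>"

definition knorm :: "int \<times> int \<Rightarrow> real" where
  "knorm k = sqrt ((of_int (fst k))\<^sup>2 + (of_int (snd k))\<^sup>2)"

definition box :: "nat \<Rightarrow> (int \<times> int) set" where
  "box N = {- int N .. int N} \<times> {- int N .. int N}"

definition torus_sq :: "(real \<times> real) set" where
  "torus_sq = {0..2*pi} \<times> {0..2*pi}"

definition cexpk :: "int \<times> int \<Rightarrow> real \<times> real \<Rightarrow> complex" where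
  "cexpk k x = exp (\<i> * of_real (of_int (fst k) * fst x + of_int (snd k) * snd x))"

definition fcoeff :: "(real \<times> real \<Rightarrow> complex) \<Rightarrow> int \<times> int \<Rightarrow> complex" where
  "fcoeff f k = (LINT x:torus_sq|lborel. f x * cnj (cexpk k x)) / of_real ((2*pi)\<^sup>2)"

definition L2sq :: "(real \<times> real \<Rightarrow> complex) \<Rightarrow> real" where
  "L2sq f = (LINT x:torus_sq|lborel. (cmod (f x))\<^sup>2)"

definition trigpoly :: "nat \<Rightarrow> (int \<times> int \<Rightarrow> complex) \<Rightarrow> real \<times> real \<Rightarrow> complex" where
  "trigpoly N c x = (\<Sum>k\<in>box N. c k * cexpk k x)"

text \<open>Fourier coefficient of curl v = d1 v2 - d2 v1 at mode k, given the
 coefficient vector v of v at mode k.\<close>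
definition curl_coeff :: "int \<times> int \<Rightarrow> complex \<times> complex \<Rightarrow> complex" where
  "curl_coeff k v = \<i> * (of_int (fst k) * snd v - of_int (snd k) * fst v)"

definition vcoeff :: "(real \<times> real \<Rightarrow> real \<times> real) \<Rightarrow> int \<times> int \<Rightarrow> complex \<times> complex" where
  "vcoeff u k = (fcoeff (\<lambda>x. of_real (fst (u x))) k, fcoeff (\<lambda>x. of_real (snd (u x))) k)"

text \<open>Admissible initial data: u0 in L2(T^2;R^2) (a 2pi-periodic, measurable,
 square integrable field), divergence free in distributions (equivalently
 k . (u0)^_k = 0 for all k) and of mean zero.\<close>
definition admissible_initial :: "(real \<times> real \<Rightarrow> real \<times> real) \<Rightarrow> bool" where
  "admissible_initial u0 \<longleftrightarrow>
     (\<forall>x1 x2. u0 (x1 + 2*pi, x2) = u0 (x1, x2) \<and> u0 (x1, x2 + 2*pi) = u0 (x1, x2)) \<and>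
     (\<lambda>x. fst (u0 x)) \<in> borel_measurable lborel \<and>
     (\<lambda>x. snd (u0 x)) \<in> borel_measurable lborel \<and>
     set_integrable lborel torus_sq (\<lambda>x. (fst (u0 x))\<^sup>2) \<and>
     set_integrable lborel torus_sq (\<lambda>x. (snd (u0 x))\<^sup>2) \<and>
     (\<forall>k. of_int (fst k) * fst (vcoeff u0 k) + of_int (snd k) * snd (vcoeff u0 k) = 0) \<and>
     (LINT x:torus_sq|lborel. fst (u0 x)) = 0 \<and>
     (LINT x:torus_sq|lborel. snd (u0 x)) = 0"

text \<open>Fourier coefficient at mode k of  u . grad u  for the field with
 coefficients uh (supported in box N):  sum over p + q = k of (uh p . i q) uh q.\<close>
definition convec :: "nat \<Rightarrow> (int \<times> int \<Rightarrow> complex \<times> complex) \<Rightarrow> int \<times> int \<Rightarrow> complex \<times> complex" where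
  "convec N uh k = (\<Sum>q\<in>box N.
      let p = uh (k - q);
          s = fst p * (\<i> * of_int (fst q)) + snd p * (\<i> * of_int (snd q))
      in (s * fst (uh q), s * snd (uh q)))"

text \<open>The SV approximation u_N, given by its Fourier coefficients uh t k
 (real-valued field, divergence free, supported in 0 < |k|_inf \<le> N), solving
 d/dt u_N + P_N(u_N . grad u_N) + grad p_N = eps Laplace(Q_N u_N), with
 u_N(.,0) = K * u0, for all times t \<ge> 0.  Rh k is the symbol of R_m (so Q_N has
 symbol 1 - Rh k), Kt k = the coefficient of K.\<close>
definition SV_solution ::
  "nat \<Rightarrow> real \<Rightarrow> (int \<times> int \<Rightarrow> real) \<Rightarrow> (int \<times> int \<Rightarrow> complex) \<Rightarrow>
   (real \<times> real \<Rightarrow> real \<times> real) \<Rightarrow> (real \<Rightarrow> int \<times> int \<Rightarrow> complex \<times> complex) \<Rightarrow> bool" where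
  "SV_solution N eps Rh Kt u0 uh \<longleftrightarrow>
     (\<forall>t\<ge>0. \<forall>k. (k = 0 \<or> k \<notin> box N) \<longrightarrow> uh t k = 0) \<and>
     (\<forall>t\<ge>0. \<forall>k. of_int (fst k) * fst (uh t k) + of_int (snd k) * snd (uh t k) = 0) \<and>
     (\<forall>t\<ge>0. \<forall>k. uh t (- k) = (cnj (fst (uh t k)), cnj (snd (uh t k)))) \<and>
     (\<forall>k. uh 0 k = (Kt k * fst (vcoeff u0 k), Kt k * snd (vcoeff u0 k))) \<and>
     (\<exists>pr :: real \<Rightarrow> int \<times> int \<Rightarrow> complex.
        (\<forall>t\<ge>0. \<forall>k. pr t (- k) = cnj (pr t k)) \<and>
        (\<forall>t\<ge>0. \<forall>k.
           ((\<lambda>s. uh s k) has_vector_derivative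
              (- (if k \<in> box N then convec N (uh t) k else 0)
               - (\<i> * of_int (fst k) * pr t k, \<i> * of_int (snd k) * pr t k)
               + (of_real (- eps * (knorm k)\<^sup>2 * (1 - Rh k)) * fst (uh t k),
                  of_real (- eps * (knorm k)\<^sup>2 * (1 - Rh k)) * snd (uh t k))))
             (at t within {0..})))"

definition vorticity :: "nat \<Rightarrow> (real \<Rightarrow> int \<times> int \<Rightarrow> complex \<times> complex) \<Rightarrow> real \<Rightarrow> real \<times> real \<Rightarrow> complex" where
  "vorticity N uh t = trigpoly N (\<lambda>k. curl_coeff k (uh t k))"

definition exp_weighted_vorticity ::
  "nat \<Rightarrow> real \<Rightarrow> (real \<Rightarrow> int \<times> int \<Rightarrow> complex \<times> complex) \<Rightarrow> real \<Rightarrow> real \<times> real \<Rightarrow> complex" where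
  "exp_weighted_vorticity N alpha uh t =
     trigpoly N (\<lambda>k. of_real (exp (alpha * t * knorm k)) * curl_coeff k (uh t k))"

end

theory Submission
  imports Defs
begin

text \<open>On the Fourier side the weighted enstrophy E(t) = \<Sum>k e^{2\<alpha>t|k|} |\<omega>_k|^2 is
  (2\<pi>)^{-2} times the left-hand side. Differentiating, the pressure drops out of the vorticity
  equation and the transport term becomes a triad sum; since e^{\<alpha>t|k|} \<le> e^{\<alpha>t|k-q|} e^{\<alpha>t|q|},
  Cauchy-Schwarz bounds it by E (G S)^{1/2} with G = \<Sum>k |k|^2 e^{2\<alpha>t|k|} |\<omega>_k|^2 and
  S = \<Sum>_{0<|p|_\<infinity>\<le>2N} |p|^{-2} \<le> 3 C log N. AM-GM lets the dissipation absorb \<epsilon> G, which is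
  only possible above |k| = 2m where the spectral viscosity acts fully, and leaves the linear rate
  \<beta>/\<epsilon>. Thus E' \<le> (\<beta>/\<epsilon>) E + (\<gamma>/\<epsilon>) E^2 for the L^2 norm, and comparison with the explicit
  solution of this Riccati equation gives the bound up to its blow-up time t*.\<close>

section \<open>Parseval's identity for trigonometric polynomials\<close>

lemma cexpk_mult_cnj: "cexpk k x * cnj (cexpk l x) = cexpk (k - l) x"
  unfolding cexpk_def exp_cnj
  by (simp add: exp_add[symmetric] algebra_simps)

lemma has_integral_exp_int_mult:
  fixes n :: int
  shows "((\<lambda>y::real. exp (\<i> * of_real (of_int n * y))) has_integral
            (if n = 0 then of_real (2*pi) else 0)) {0..2*pi}"
proof (cases "n = 0")
  case True
  then show ?thesis
    using has_integral_const_real[of "1::complex" 0 "2*pi"] by (simp add: scaleR_conv_of_real)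
next
  case False
  define F where "F y = exp (\<i> * of_real (of_int n * y)) / (\<i> * of_int n)" for y :: real
  have F': "(F has_vector_derivative exp (\<i> * of_real (of_int n * y))) (at y within {0..2*pi})" for y
  proof -
    have "((\<lambda>z. exp (\<i> * (of_int n * z)) / (\<i> * of_int n)) has_field_derivative
             exp (\<i> * (of_int n * of_real y))) (at (of_real y))"
      using False by (auto intro!: derivative_eq_intros simp: field_simps)
    from has_vector_derivative_real_field[OF this] show ?thesis
      unfolding F_def by simp
  qed
  have period: "exp (\<i> * of_real (of_int n * (2 * pi))) = 1"
    using exp_integer_2pi[of "of_int n"] by (simp add: algebra_simps)
  show ?thesis
    using fundamental_theorem_of_calculus[of 0 "2*pi" F] F' False period
    by (simp add: F_def)
qed

lemma torus_sq_eq_cbox: "torus_sq = cbox (0, 0) (2*pi, 2*pi)"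
  unfolding torus_sq_def cbox_Pair_eq by (simp add: cbox_interval)

lemma continuous_on_cexpk: "continuous_on S (cexpk k)"
  unfolding cexpk_def by (intro continuous_intros)

lemma has_integral_cexpk:
  "(cexpk k has_integral (if k = 0 then of_real (4*pi^2) else 0)) torus_sq"
proof -
  let ?I = "\<lambda>n::int. if n = 0 then complex_of_real (2*pi) else 0"
  have split: "cexpk k (x, y) = exp (\<i> * of_real (of_int (fst k) * x)) * exp (\<i> * of_real (of_int (snd k) * y))" for x y
    unfolding cexpk_def by (simp add: exp_add[symmetric] algebra_simps)
  have "integral torus_sq (cexpk k) =
      integral (cbox 0 (2*pi)) (\<lambda>x. integral (cbox 0 (2*pi)) (\<lambda>y. cexpk k (x, y)))"
    unfolding torus_sq_eq_cbox by (intro integral_prod_continuous continuous_on_cexpk)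
  also have "\<dots> = integral {0..2*pi} (\<lambda>x. exp (\<i> * of_real (of_int (fst k) * x)) * ?I (snd k))"
    unfolding cbox_interval split integral_mult_right
    using has_integral_exp_int_mult[of "snd k"] by (simp add: integral_unique)
  also have "\<dots> = ?I (fst k) * ?I (snd k)"
    unfolding integral_mult_left
    using has_integral_exp_int_mult[of "fst k"] by (simp add: integral_unique)
  also have "\<dots> = (if k = 0 then of_real (4*pi^2) else 0)"
    by (cases k) (auto simp: power2_eq_square zero_prod_def)
  moreover have "cexpk k integrable_on torus_sq"
    unfolding torus_sq_eq_cbox by (intro integrable_continuous continuous_on_cexpk)
  ultimately show ?thesis
    by (metis has_integral_integral)
qed

lemma continuous_on_trigpoly: "continuous_on S (trigpoly N c)"
  unfolding trigpoly_def by (intro continuous_intros continuous_on_cexpk)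

lemma finite_box: "finite (box N)"
  unfolding box_def by simp

lemma L2sq_eq_integral:
  assumes "continuous_on torus_sq f"
  shows "L2sq f = integral torus_sq (\<lambda>x. (cmod (f x))^2)"
proof -
  have "compact torus_sq"
    unfolding torus_sq_def by (intro compact_Times compact_Icc)
  moreover have "continuous_on torus_sq (\<lambda>x. (cmod (f x))^2)"
    by (intro continuous_intros assms)
  ultimately have "set_integrable lborel torus_sq (\<lambda>x. (cmod (f x))^2)"
    unfolding set_integrable_def by (rule borel_integrable_compact)
  then show ?thesis
    unfolding L2sq_def by (rule set_borel_integral_eq_integral)
qed

lemma L2sq_trigpoly: "L2sq (trigpoly N c) = 4*pi^2 * (\<Sum>k\<in>box N. (cmod (c k))^2)"
proof -
  let ?g = "\<lambda>x. \<Sum>k\<in>box N. \<Sum>l\<in>box N. c k * cnj (c l) * cexpk (k - l) x"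
  have "(?g has_integral (\<Sum>k\<in>box N. \<Sum>l\<in>box N.
          c k * cnj (c l) * (if k - l = 0 then of_real (4*pi^2) else 0))) torus_sq"
    by (intro has_integral_sum finite_box has_integral_mult_right has_integral_cexpk)
  also have "(\<Sum>k\<in>box N. \<Sum>l\<in>box N. c k * cnj (c l) * (if k - l = 0 then of_real (4*pi^2) else 0))
      = (\<Sum>k\<in>box N. c k * cnj (c k) * of_real (4*pi^2))"
    by (intro sum.cong refl) (simp add: if_distrib[where f="\<lambda>z. _ * z"] cong: if_cong,
        simp add: sum.delta finite_box)
  also have "\<dots> = (\<Sum>k\<in>box N. of_real (4*pi^2 * (cmod (c k))^2))"
    by (intro sum.cong refl) (simp only: of_real_mult complex_norm_square ac_simps)
  also have "\<dots> = of_real (4*pi^2 * (\<Sum>k\<in>box N. (cmod (c k))^2))"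
    by (simp only: of_real_sum sum_distrib_left)
  finally have "((Re \<circ> ?g) has_integral Re (of_real (4*pi^2 * (\<Sum>k\<in>box N. (cmod (c k))^2))))
      torus_sq"
    by (rule has_integral_linear[OF _ bounded_linear_Re])
  moreover have "Re (?g x) = (cmod (trigpoly N c x))^2" for x
  proof -
    have "trigpoly N c x * cnj (trigpoly N c x) = ?g x"
      unfolding trigpoly_def cnj_sum sum_product
      by (intro sum.cong refl) (simp add: cexpk_mult_cnj[symmetric] algebra_simps)
    then show ?thesis
      by (metis Re_complex_of_real complex_norm_square)
  qed
  ultimately show ?thesis
    using L2sq_eq_integral[OF continuous_on_trigpoly] by (simp add: o_def integral_unique)
qed

section \<open>Comparison with the Riccati equation\<close>

lemma nonpos_if_deriv_le_const_mult:
  fixes P P' :: "real \<Rightarrow> real"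
  assumes der: "\<And>s. s \<in> {0..t} \<Longrightarrow> (P has_real_derivative P' s) (at s within {0..})"
    and growth: "\<And>s. s \<in> {0..t} \<Longrightarrow> P s > 0 \<Longrightarrow> P' s \<le> M * P s"
    and P0: "P 0 \<le> 0" and t: "t \<ge> 0"
  shows "P t \<le> 0"
proof (rule ccontr)
  assume Pt: "\<not> P t \<le> 0"
  have contP: "continuous_on {0..t} P"
    by (rule DERIV_continuous_on, rule DERIV_subset[OF der]) auto
  define T where "T = {0..t} \<inter> P -` {..0}"
  have "closed T"
    unfolding T_def by (intro continuous_closed_preimage contP closed_atLeastAtMost closed_atMost)
  moreover have "0 \<in> T" "bdd_above T"
    using t P0 by (auto simp: T_def intro: bdd_aboveI[of _ t])
  ultimately have "Sup T \<in> T"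
    using closed_contains_Sup by blast
  define s0 where "s0 = Sup T"
  have s0: "0 \<le> s0" "s0 < t" "P s0 \<le> 0"
    using \<open>Sup T \<in> T\<close> Pt unfolding s0_def T_def by (auto simp: order.order_iff_strict)
  have pos_after: "P s > 0" if "s0 < s" "s \<le> t" for s
  proof (rule ccontr)
    assume "\<not> P s > 0"
    then have "s \<in> T" using that s0 by (auto simp: T_def)
    then show False
      using cSup_upper[OF _ \<open>bdd_above T\<close>] that unfolding s0_def by fastforce
  qed
  \<comment> \<open>After its last zero s0 the function P is positive, so P e^{-Ms} is nonincreasing.\<close>
  define Q where "Q s = P s * exp (- M * s)" for s
  have "Q t \<le> Q s0"
  proof (rule DERIV_nonpos_imp_decreasing_open[of s0 t Q])
    show "continuous_on {s0..t} Q"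
      unfolding Q_def using s0 by (intro continuous_intros continuous_on_subset[OF contP]) auto
  next
    fix s assume s: "s0 < s" "s < t"
    then have "at s within {0..} = at s"
      using s0 by (intro at_within_interior) auto
    then have "(P has_real_derivative P' s) (at s)"
      using der[of s] s s0 by simp
    then have "(Q has_real_derivative (P' s - M * P s) * exp (- M * s)) (at s)"
      unfolding Q_def by (auto intro!: derivative_eq_intros simp: algebra_simps)
    moreover have "(P' s - M * P s) * exp (- M * s) \<le> 0"
      using growth[of s] pos_after[of s] s s0 by (simp add: mult_nonpos_nonneg)
    ultimately show "\<exists>y. (Q has_real_derivative y) (at s) \<and> y \<le> 0"
      by blast
  qed (use s0 in simp)
  moreover have "Q s0 \<le> 0" "Q t > 0"
    using s0 Pt by (simp_all add: Q_def mult_nonpos_nonneg)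
  ultimately show False
    by simp
qed

text \<open>The solution of y' = a y + b y^2 from y 0 = E 0 is E 0 exp (a t) / den t with
  den t = 1 - b/a E 0 (exp (a t) - 1); the defect P = E den - E 0 exp (a t) satisfies
  P' \<le> (a + b E) P and P 0 = 0.\<close>
lemma riccati_comparison:
  fixes E :: "real \<Rightarrow> real" and a b t :: real
  assumes riccati: "\<And>s. s \<ge> 0 \<Longrightarrow>
      \<exists>D. (E has_real_derivative D) (at s within {0..}) \<and> D \<le> a * E s + b * (E s)^2"
    and nonneg: "\<And>s. s \<ge> 0 \<Longrightarrow> E s \<ge> 0"
    and a: "a > 0" and b: "b \<ge> 0" and t: "t \<ge> 0"
  shows "E t * (1 - b / a * E 0 * (exp (a * t) - 1)) \<le> E 0 * exp (a * t)"
proof -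
  obtain E' where der: "\<And>s. s \<ge> 0 \<Longrightarrow> (E has_real_derivative E' s) (at s within {0..})"
    and ineq: "\<And>s. s \<ge> 0 \<Longrightarrow> E' s \<le> a * E s + b * (E s)^2"
    using riccati by metis
  define c where "c = b / a * E 0"
  define den where "den s = 1 - c * (exp (a * s) - 1)" for s
  define P where "P s = E s * den s - E 0 * exp (a * s)" for s
  have c: "c \<ge> 0" "c * a = b * E 0"
    using a b nonneg[of 0] by (simp_all add: c_def)
  show ?thesis
  proof (cases "den t \<ge> 0")
    case False
    then have "E t * den t \<le> 0"
      using nonneg[OF t] by (simp add: mult_nonneg_nonpos)
    also have "0 \<le> E 0 * exp (a * t)"
      using nonneg[of 0] by simp
    finally show ?thesis
      by (simp add: den_def c_def)
  next
    case True
    have den_nonneg: "den s \<ge> 0" if "s \<le> t" for s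
      using True c(1) a that by (smt (verit) den_def exp_le_cancel_iff mult_left_mono mult_le_cancel_left_pos)
    obtain M where M: "\<And>s. s \<in> {0..t} \<Longrightarrow> a + b * E s \<le> M"
    proof -
      have "continuous_on {0..t} E"
        by (rule DERIV_continuous_on, rule DERIV_subset[OF der]) auto
      then have "compact ((\<lambda>s. a + b * E s) ` {0..t})"
        by (intro compact_continuous_image continuous_intros compact_Icc)
      then show ?thesis
        using that compact_imp_bounded bounded_iff by (metis abs_le_D1 image_eqI real_norm_def)
    qed
    define P' where "P' s = E' s * den s - c * a * E s * exp (a * s) - a * E 0 * exp (a * s)" for s
    have "P t \<le> 0"
    proof (rule nonpos_if_deriv_le_const_mult[where P=P and P'=P' and M=M])
      show "(P has_real_derivative P' s) (at s within {0..})" if "s \<in> {0..t}" for s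
      proof -
        have "((\<lambda>s. E s * den s - E 0 * exp (a * s)) has_real_derivative
            E' s * den s + E s * (- c * (a * exp (a * s))) - E 0 * (a * exp (a * s))) (at s within {0..})"
          unfolding den_def by (rule derivative_eq_intros der refl | use that in simp)+
        then show ?thesis
          unfolding P_def[abs_def] P'_def by (simp add: algebra_simps)
      qed
      show "P' s \<le> M * P s" if s: "s \<in> {0..t}" and "P s > 0" for s
      proof -
        have "E' s * den s \<le> (a * E s + b * (E s)^2) * den s"
          using ineq den_nonneg s by (intro mult_right_mono) auto
        then have "P' s \<le> (a + b * E s) * P s"
          unfolding P'_def P_def using c(2) by (simp add: algebra_simps power2_eq_square)
        also have "\<dots> \<le> M * P s"
          using M s \<open>P s > 0\<close> by (intro mult_right_mono) auto
        finally show ?thesis .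
      qed
    qed (use t in \<open>simp_all add: P_def den_def\<close>)
    then show ?thesis
      by (simp add: P_def den_def c_def)
  qed
qed

lemma riccati_bound:
  fixes E :: "real \<Rightarrow> real" and a b t :: real
  assumes riccati: "\<And>s. s \<ge> 0 \<Longrightarrow>
      \<exists>D. (E has_real_derivative D) (at s within {0..}) \<and> D \<le> a * E s + b * (E s)^2"
    and nonneg: "\<And>s. s \<ge> 0 \<Longrightarrow> E s \<ge> 0"
    and a: "a > 0" and b: "b > 0" and t: "t \<ge> 0"
    and before_blowup: "E 0 = 0 \<or> t < ln (1 + a / (b * E 0)) / a"
  shows "E t \<le> E 0 * exp (a * t) / (1 - b / a * E 0 * (exp (a * t) - 1))"
proof -
  have denom_pos: "1 - b / a * E 0 * (exp (a * t) - 1) > 0"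
  proof (cases "E 0 = 0")
    case False
    then have bE: "b * E 0 > 0"
      using nonneg[of 0] b by simp
    have "exp (a * t) < 1 + a / (b * E 0)"
      using before_blowup False a bE
      by (metis exp_less_cancel_iff exp_ln add_pos_pos zero_less_one divide_pos_pos
          mult.commute pos_less_divide_eq)
    then have "b / a * E 0 * (exp (a * t) - 1) < b / a * E 0 * (a / (b * E 0))"
      using a bE by (intro mult_strict_left_mono) auto
    also have "\<dots> = 1"
      using a b False by (simp add: field_simps)
    finally show ?thesis
      by simp
  qed simp
  show ?thesis
    using riccati_comparison[OF riccati nonneg a less_imp_le[OF b] t] denom_pos
    by (simp add: pos_le_divide_eq)
qed

section \<open>The nonlinear term\<close>

text \<open>The symbol of u_{k-q} . \<nabla> acting on the mode q, so that
  convec N u k = \<Sum>q\<in>box N. transport_coeff u k q * u q.\<close>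
definition transport_coeff :: "(int \<times> int \<Rightarrow> complex \<times> complex) \<Rightarrow> int \<times> int \<Rightarrow> int \<times> int \<Rightarrow> complex"
  where "transport_coeff u k q =
    fst (u (k - q)) * (\<i> * of_int (fst q)) + snd (u (k - q)) * (\<i> * of_int (snd q))"

lemma curl_coeff_sum:
  "curl_coeff k (\<Sum>q\<in>A. (f q, g q)) = (\<Sum>q\<in>A. curl_coeff k (f q, g q))"
  by (induction A rule: infinite_finite_induct) (simp_all add: curl_coeff_def algebra_simps)

lemma curl_coeff_add_modes: "curl_coeff (k + q) v = curl_coeff k v + curl_coeff q v"
  by (simp add: curl_coeff_def algebra_simps)

lemma curl_coeff_convec_eq:
  "curl_coeff k (convec N u k) = (\<Sum>q\<in>box N. transport_coeff u k q * curl_coeff k (u q))"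
proof -
  have "convec N u k =
      (\<Sum>q\<in>box N. (transport_coeff u k q * fst (u q), transport_coeff u k q * snd (u q)))"
    unfolding convec_def transport_coeff_def Let_def by simp
  then show ?thesis
    by (simp add: curl_coeff_sum) (simp add: curl_coeff_def algebra_simps)
qed

lemma triad_identity:
  fixes a1 a2 b1 b2 p1 p2 q1 q2 :: complex
  assumes "p1 * a1 + p2 * a2 = 0" "q1 * b1 + q2 * b2 = 0"
  shows "(a1 * (\<i> * q1) + a2 * (\<i> * q2)) * (\<i> * (p1 * b2 - p2 * b1))
       + (b1 * (\<i> * p1) + b2 * (\<i> * p2)) * (\<i> * (q1 * a2 - q2 * a1)) = 0"
proof -
  have "(a1 * (\<i> * q1) + a2 * (\<i> * q2)) * (\<i> * (p1 * b2 - p2 * b1))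
       + (b1 * (\<i> * p1) + b2 * (\<i> * p2)) * (\<i> * (q1 * a2 - q2 * a1))
     = (\<i> * \<i>) * ((p1 * a1 + p2 * a2) * (q1 * b2 - q2 * b1) + (q1 * b1 + q2 * b2) * (p1 * a2 - p2 * a1))"
    by algebra
  then show ?thesis
    using assms by simp
qed

text \<open>With curl_k = curl_{k-q} + curl_q, the curl_{k-q} part of the transport term vanishes for a
  divergence-free field: the terms for q and k - q cancel pairwise.\<close>
lemma transport_curl_antisymmetric_part:
  assumes supp: "\<And>k. k \<notin> box N \<Longrightarrow> u k = 0"
    and div: "\<And>k. of_int (fst k) * fst (u k) + of_int (snd k) * snd (u k) = 0"
  shows "(\<Sum>q\<in>box N. transport_coeff u k q * curl_coeff (k - q) (u q)) = 0"
proof -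
  define f where "f q = transport_coeff u k q * curl_coeff (k - q) (u q)" for q
  define A where "A = {q\<in>box N. k - q \<in> box N}"
  have "sum f (box N) = sum f A"
    by (rule sum.mono_neutral_right[OF finite_box]) (auto simp: A_def f_def transport_coeff_def supp)
  moreover have "sum (\<lambda>q. f (k - q)) A = sum f A"
    using sum.reindex_bij_betw[of "\<lambda>q. k - q" A A f]
    by (simp add: bij_betwI[where g="\<lambda>q. k - q"] A_def)
  moreover have "f q + f (k - q) = 0" for q
    unfolding f_def transport_coeff_def curl_coeff_def diff_diff_eq2 add_diff_cancel_left'
    by (rule triad_identity[OF div[of "k - q"] div[of q]])
  then have "sum f A + sum (\<lambda>q. f (k - q)) A = 0"
    by (simp add: sum.distrib[symmetric])
  ultimately show ?thesis
    by (simp add: f_def)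
qed

lemma curl_coeff_convec:
  assumes supp: "\<And>k. k \<notin> box N \<Longrightarrow> u k = 0"
    and div: "\<And>k. of_int (fst k) * fst (u k) + of_int (snd k) * snd (u k) = 0"
  shows "curl_coeff k (convec N u k) = (\<Sum>q\<in>box N. transport_coeff u k q * curl_coeff q (u q))"
proof -
  have "curl_coeff k (convec N u k) =
      (\<Sum>q\<in>box N. transport_coeff u k q * curl_coeff (k - q) (u q))
    + (\<Sum>q\<in>box N. transport_coeff u k q * curl_coeff q (u q))"
    unfolding curl_coeff_convec_eq sum.distrib[symmetric]
    by (intro sum.cong refl) (simp add: distrib_left[symmetric] curl_coeff_add_modes[symmetric])
  then show ?thesis
    using transport_curl_antisymmetric_part[OF supp div] by simp
qed

lemma lagrange_identity:
  fixes a1 a2 :: complex and p1 p2 :: int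
  shows "(cmod (of_int p1 * a2 - of_int p2 * a1))^2 + (cmod (of_int p1 * a1 + of_int p2 * a2))^2
       = (real_of_int p1 ^ 2 + real_of_int p2 ^ 2) * ((cmod a1)^2 + (cmod a2)^2)"
proof -
  have "(cmod (of_int p1 * a2 - of_int p2 * a1))^2 + (cmod (of_int p1 * a1 + of_int p2 * a2))^2
     = (p1 * Re a2 - p2 * Re a1)^2 + (p1 * Im a2 - p2 * Im a1)^2
       + ((p1 * Re a1 + p2 * Re a2)^2 + (p1 * Im a1 + p2 * Im a2)^2)"
    unfolding cmod_power2 by simp
  also have "\<dots> = (real_of_int p1 ^ 2 + real_of_int p2 ^ 2) *
      (((Re a1)^2 + (Im a1)^2) + ((Re a2)^2 + (Im a2)^2))"
    by algebra
  finally show ?thesis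
    unfolding cmod_power2 .
qed

lemma knorm_power2: "(knorm k)^2 = (real_of_int (fst k))^2 + (real_of_int (snd k))^2"
  unfolding knorm_def by simp

lemma knorm_nonneg: "knorm k \<ge> 0"
  unfolding knorm_def by simp

lemma knorm_pos: "k \<noteq> 0 \<Longrightarrow> knorm k > 0"
  unfolding knorm_def by (cases k) (auto simp: sum_power2_gt_zero_iff zero_prod_def)

lemma knorm_eq_norm: "knorm k = norm (real_of_int (fst k), real_of_int (snd k))"
  unfolding knorm_def norm_Pair by simp

lemma knorm_triangle: "knorm (k + l) \<le> knorm k + knorm l"
  unfolding knorm_eq_norm
  using norm_triangle_ineq[of "(real_of_int (fst k), real_of_int (snd k))"
      "(real_of_int (fst l), real_of_int (snd l))"]
  by simp

lemma norm_prod_power2: "(norm v)^2 = (norm (fst v))^2 + (norm (snd v))^2"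
  by (cases v) (simp add: norm_Pair)

lemma cmod_curl_coeff:
  assumes "of_int (fst k) * fst v + of_int (snd k) * snd v = 0"
  shows "cmod (curl_coeff k v) = knorm k * norm v"
proof -
  have "(cmod (curl_coeff k v))^2 = (knorm k * norm v)^2"
    using lagrange_identity[of "fst k" "snd v" "snd k" "fst v"] assms
    by (simp add: curl_coeff_def norm_mult power_mult_distrib knorm_power2 norm_prod_power2)
  then show ?thesis
    using knorm_nonneg by (simp add: power2_eq_iff_nonneg)
qed

lemma cmod_transport_coeff_le: "cmod (transport_coeff u k q) \<le> knorm q * norm (u (k - q))"
proof -
  let ?a = "u (k - q)"
  have tc: "cmod (transport_coeff u k q) = cmod (of_int (fst q) * fst ?a + of_int (snd q) * snd ?a)"
  proof -
    have "transport_coeff u k q = \<i> * (of_int (fst q) * fst ?a + of_int (snd q) * snd ?a)"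
      unfolding transport_coeff_def by (simp add: algebra_simps)
    then show ?thesis
      by (simp only: norm_mult norm_ii mult_1)
  qed
  have "(cmod (transport_coeff u k q))^2
      \<le> (cmod (of_int (fst q) * snd ?a - of_int (snd q) * fst ?a))^2 + (cmod (transport_coeff u k q))^2"
    by simp
  also have "\<dots> = (knorm q * norm ?a)^2"
    using lagrange_identity[of "fst q" "snd ?a" "snd q" "fst ?a"]
    by (simp only: tc power_mult_distrib knorm_power2 norm_prod_power2)
  finally show ?thesis
    by (rule power2_le_imp_le) (simp add: knorm_nonneg)
qed

definition inv_knorm :: "int \<times> int \<Rightarrow> real"
  where "inv_knorm p = (if p = 0 then 0 else 1 / knorm p)"

lemma inv_knorm_nonneg: "inv_knorm p \<ge> 0"
  unfolding inv_knorm_def using knorm_nonneg by simp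

lemma norm_eq_inv_knorm_mult_cmod_curl:
  assumes "u 0 = 0" and "of_int (fst p) * fst (u p) + of_int (snd p) * snd (u p) = 0"
  shows "norm (u p) = inv_knorm p * cmod (curl_coeff p (u p))"
  using assms cmod_curl_coeff[OF assms(2)] knorm_pos[of p] by (cases "p = 0") (auto simp: inv_knorm_def)

lemma sum_comp_le_sum:
  fixes g :: "'b \<Rightarrow> real"
  assumes "finite A" "finite B" "inj_on f A" "\<And>p. g p \<ge> 0"
    and "\<And>x. x \<in> A \<Longrightarrow> f x \<notin> B \<Longrightarrow> g (f x) = 0"
  shows "(\<Sum>x\<in>A. g (f x)) \<le> sum g B"
proof -
  have "(\<Sum>x\<in>A. g (f x)) = sum g (f ` A)"
    using assms(3) by (simp add: sum.reindex)
  also have "\<dots> = sum g (f ` A \<inter> B)"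
    by (rule sum.mono_neutral_right) (use assms in auto)
  also have "\<dots> \<le> sum g B"
    by (rule sum_mono2) (use assms in auto)
  finally show ?thesis .
qed

lemma diff_mem_box_double: "k \<in> box N \<Longrightarrow> q \<in> box N \<Longrightarrow> k - q \<in> box (2 * N)"
  unfolding box_def by auto

lemma triad_sum_cauchy_schwarz:
  fixes W h :: "int \<times> int \<Rightarrow> real"
  assumes W_supp: "\<And>k. k \<notin> box N \<Longrightarrow> W k = 0"
    and W_nonneg: "\<And>k. W k \<ge> 0" and h_nonneg: "\<And>p. h p \<ge> 0"
  shows "(\<Sum>k\<in>box N. \<Sum>q\<in>box N. W k * W (k - q) * (knorm q * W q * h (k - q)))^2
     \<le> (\<Sum>k\<in>box N. (W k)^2)^2 * ((\<Sum>k\<in>box N. (knorm k)^2 * (W k)^2) * (\<Sum>p\<in>box (2*N). (h p)^2))"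
proof -
  define B where "B = box N"
  define a where "a x = W (fst x) * W (fst x - snd x)" for x :: "(int \<times> int) \<times> (int \<times> int)"
  define b where "b x = knorm (snd x) * W (snd x) * h (fst x - snd x)" for x :: "(int \<times> int) \<times> (int \<times> int)"
  have a_sum: "(\<Sum>x\<in>B \<times> B. (a x)^2) \<le> (\<Sum>k\<in>B. (W k)^2)^2"
  proof -
    have "(\<Sum>x\<in>B \<times> B. (a x)^2) = (\<Sum>k\<in>B. (W k)^2 * (\<Sum>q\<in>B. (W (k - q))^2))"
      by (simp add: sum.cartesian_product case_prod_beta a_def power_mult_distrib sum_distrib_left)
    also have "\<dots> \<le> (\<Sum>k\<in>B. (W k)^2 * (\<Sum>p\<in>B. (W p)^2))"
      using W_supp unfolding B_def
      by (intro sum_mono mult_left_mono sum_comp_le_sum[where f="\<lambda>q. k - q" for k])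
        (auto simp: finite_box inj_on_def)
    finally show ?thesis
      by (simp add: sum_distrib_right power2_eq_square)
  qed
  have b_sum: "(\<Sum>x\<in>B \<times> B. (b x)^2)
      \<le> (\<Sum>k\<in>B. (knorm k)^2 * (W k)^2) * (\<Sum>p\<in>box (2*N). (h p)^2)"
  proof -
    have "(\<Sum>x\<in>B \<times> B. (b x)^2) = (\<Sum>k\<in>B. \<Sum>q\<in>B. (knorm q)^2 * (W q)^2 * (h (k - q))^2)"
      by (simp add: sum.cartesian_product case_prod_beta b_def power_mult_distrib)
    also have "\<dots> = (\<Sum>q\<in>B. (knorm q)^2 * (W q)^2 * (\<Sum>k\<in>B. (h (k - q))^2))"
      by (subst sum.swap) (simp add: sum_distrib_left)
    also have "\<dots> \<le> (\<Sum>q\<in>B. (knorm q)^2 * (W q)^2 * (\<Sum>p\<in>box (2*N). (h p)^2))"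
      using diff_mem_box_double unfolding B_def
      by (intro sum_mono mult_left_mono sum_comp_le_sum[where f="\<lambda>k. k - q" for q])
        (auto simp: finite_box inj_on_def)
    finally show ?thesis
      by (simp add: sum_distrib_right)
  qed
  have "(\<Sum>k\<in>B. \<Sum>q\<in>B. W k * W (k - q) * (knorm q * W q * h (k - q)))^2
      = (\<Sum>x\<in>B \<times> B. a x * b x)^2"
    unfolding sum.cartesian_product by (simp add: a_def b_def case_prod_beta)
  also have "\<dots> \<le> (\<Sum>x\<in>B \<times> B. (a x)^2) * (\<Sum>x\<in>B \<times> B. (b x)^2)"
    by (rule Cauchy_Schwarz_ineq_sum)
  also have "\<dots> \<le> (\<Sum>k\<in>B. (W k)^2)^2 * (\<Sum>x\<in>B \<times> B. (b x)^2)"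
    by (rule mult_right_mono[OF a_sum]) (simp add: sum_nonneg)
  also have "\<dots> \<le> (\<Sum>k\<in>B. (W k)^2)^2 * ((\<Sum>k\<in>B. (knorm k)^2 * (W k)^2) * (\<Sum>p\<in>box (2*N). (h p)^2))"
    by (rule mult_left_mono[OF b_sum]) simp
  finally show ?thesis
    unfolding B_def .
qed

text \<open>The weight e^{\<tau>|k|} is submultiplicative along k = (k - q) + q, which lets it pass through
  the quadratic term.\<close>
lemma nonlinear_term_le_triad_sum:
  fixes u :: "int \<times> int \<Rightarrow> complex \<times> complex" and \<tau> :: real
  assumes supp: "\<And>k. k = 0 \<or> k \<notin> box N \<Longrightarrow> u k = 0"
    and div: "\<And>k. of_int (fst k) * fst (u k) + of_int (snd k) * snd (u k) = 0"
    and tau: "\<tau> \<ge> 0"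
    and W_def: "W = (\<lambda>k. exp (\<tau> * knorm k) * cmod (curl_coeff k (u k)))"
  shows "cmod (\<Sum>k\<in>box N. of_real ((exp (\<tau> * knorm k))^2) * cnj (curl_coeff k (u k))
                 * curl_coeff k (convec N u k))
     \<le> (\<Sum>k\<in>box N. \<Sum>q\<in>box N. W k * W (k - q) * (knorm q * W q * inv_knorm (k - q)))"
proof -
  define e where "e k = exp (\<tau> * knorm k)" for k
  define \<omega> where "\<omega> k = curl_coeff k (u k)" for k
  have e_submult: "e k \<le> e (k - q) * e q" for k q
    using knorm_triangle[of "k - q" q] tau
    by (simp add: e_def exp_add[symmetric] mult_left_mono flip: distrib_left)
  have triad: "cmod (of_real ((e k)^2) * cnj (\<omega> k) * (transport_coeff u k q * \<omega> q))
      \<le> W k * W (k - q) * (knorm q * W q * inv_knorm (k - q))" for k q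
  proof -
    have "cmod (of_real ((e k)^2) * cnj (\<omega> k) * (transport_coeff u k q * \<omega> q))
        = (e k)^2 * cmod (\<omega> k) * cmod (transport_coeff u k q) * cmod (\<omega> q)"
      by (simp add: e_def norm_mult norm_power del: of_real_power)
    also have "\<dots> \<le> (e k * (e (k - q) * e q)) * cmod (\<omega> k)
        * (knorm q * (inv_knorm (k - q) * cmod (\<omega> (k - q)))) * cmod (\<omega> q)"
      using cmod_transport_coeff_le[of u k q] e_submult[of k q] knorm_nonneg[of q]
        inv_knorm_nonneg[of "k - q"]
        norm_eq_inv_knorm_mult_cmod_curl[of u "k - q", OF supp div]
      by (intro mult_mono) (auto simp: e_def \<omega>_def power2_eq_square)
    also have "\<dots> = W k * W (k - q) * (knorm q * W q * inv_knorm (k - q))"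
      by (simp add: W_def e_def \<omega>_def algebra_simps)
    finally show ?thesis .
  qed
  have expand: "(\<Sum>k\<in>box N. of_real ((e k)^2) * cnj (\<omega> k) * curl_coeff k (convec N u k))
      = (\<Sum>k\<in>box N. \<Sum>q\<in>box N. of_real ((e k)^2) * cnj (\<omega> k) * (transport_coeff u k q * \<omega> q))"
    using curl_coeff_convec[of N u] supp div unfolding \<omega>_def
    by (simp add: sum_distrib_left)
  have "cmod (\<Sum>k\<in>box N. of_real ((e k)^2) * cnj (\<omega> k) * curl_coeff k (convec N u k))
      \<le> (\<Sum>k\<in>box N. \<Sum>q\<in>box N. cmod (of_real ((e k)^2) * cnj (\<omega> k) * (transport_coeff u k q * \<omega> q)))"
    unfolding expand by (intro order.trans[OF norm_sum] sum_mono norm_sum)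
  also have "\<dots> \<le> (\<Sum>k\<in>box N. \<Sum>q\<in>box N. W k * W (k - q) * (knorm q * W q * inv_knorm (k - q)))"
    by (intro sum_mono triad)
  finally show ?thesis
    unfolding e_def \<omega>_def .
qed

lemma nonlinear_term_bound:
  fixes u :: "int \<times> int \<Rightarrow> complex \<times> complex" and \<tau> :: real
  assumes supp: "\<And>k. k = 0 \<or> k \<notin> box N \<Longrightarrow> u k = 0"
    and div: "\<And>k. of_int (fst k) * fst (u k) + of_int (snd k) * snd (u k) = 0"
    and tau: "\<tau> \<ge> 0"
  shows "(cmod (\<Sum>k\<in>box N. of_real ((exp (\<tau> * knorm k))^2) * cnj (curl_coeff k (u k))
                  * curl_coeff k (convec N u k)))^2
     \<le> (\<Sum>k\<in>box N. (exp (\<tau> * knorm k) * cmod (curl_coeff k (u k)))^2)^2 *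
       ((\<Sum>k\<in>box N. (knorm k)^2 * (exp (\<tau> * knorm k) * cmod (curl_coeff k (u k)))^2) *
        (\<Sum>p\<in>box (2*N). (inv_knorm p)^2))"
proof -
  define W where "W = (\<lambda>k. exp (\<tau> * knorm k) * cmod (curl_coeff k (u k)))"
  have "cmod (\<Sum>k\<in>box N. of_real ((exp (\<tau> * knorm k))^2) * cnj (curl_coeff k (u k))
                 * curl_coeff k (convec N u k))
     \<le> (\<Sum>k\<in>box N. \<Sum>q\<in>box N. W k * W (k - q) * (knorm q * W q * inv_knorm (k - q)))"
    (is "?NL \<le> ?T")
    by (rule nonlinear_term_le_triad_sum[OF supp div tau W_def])
  then have "?NL^2 \<le> ?T^2"
    by (rule power_mono) simp
  also have "\<dots> \<le> (\<Sum>k\<in>box N. (W k)^2)^2 *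
      ((\<Sum>k\<in>box N. (knorm k)^2 * (W k)^2) * (\<Sum>p\<in>box (2*N). (inv_knorm p)^2))"
    using supp by (intro triad_sum_cauchy_schwarz) (auto simp: W_def inv_knorm_nonneg curl_coeff_def)
  finally show ?thesis
    by (simp add: W_def)
qed

section \<open>The energy inequality\<close>

text \<open>The rate 2\<alpha>|k| - 2\<epsilon>|k|^2 (1 - R_k) of the weighted enstrophy plus the \<epsilon>|k|^2 lent to
  the nonlinear term: above |k| = 2m completing the square bounds it by \<alpha>^2/\<epsilon>, below 2m the
  missing viscosity costs at most 8\<epsilon>m^2.\<close>
lemma spectral_viscosity_rate_le:
  fixes x eps alpha m r :: real
  assumes eps: "eps > 0" and x: "x \<ge> 0" and r: "0 \<le> r" "r \<le> 1"
    and high: "x > 2 * m \<Longrightarrow> r = 0"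
  shows "2 * alpha * x - 2 * eps * x^2 * (1 - r) + eps * x^2 \<le> (alpha^2 + 8 * eps^2 * m^2) / eps"
proof -
  have "0 \<le> (alpha - eps * x)^2 / eps"
    using eps by simp
  also have "(alpha - eps * x)^2 / eps = alpha^2 / eps - 2 * alpha * x + eps * x^2"
    using eps by (simp add: field_simps power2_eq_square)
  finally have quadratic: "2 * alpha * x - eps * x^2 \<le> alpha^2 / eps"
    by linarith
  have "eps * x^2 * r \<le> 4 * eps * m^2"
  proof (cases "x > 2 * m")
    case False
    then have "x^2 \<le> (2 * m)^2"
      using x by (intro power_mono) auto
    then have "x^2 * r \<le> (2 * m)^2"
      using mult_left_le[of r "x^2"] r by simp
    then show ?thesis
      using eps by (simp add: power2_eq_square mult_left_mono)
  qed (use high eps in simp)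
  moreover have "(alpha^2 + 8 * eps^2 * m^2) / eps = alpha^2 / eps + 8 * eps * m^2"
    using eps by (simp add: field_simps power2_eq_square)
  ultimately show ?thesis
    using quadratic by (simp add: algebra_simps)
qed

lemma two_mult_le_of_power2_le:
  fixes Z Y G S eps :: real
  assumes "Y \<ge> 0" "G \<ge> 0" "S \<ge> 0" "eps > 0"
    and "Z^2 \<le> Y^2 * (G * S)"
  shows "2 * Z \<le> eps * G + S * Y^2 / eps"
proof -
  have "(2 * Z)^2 \<le> 4 * (Y^2 * (G * S))"
    using assms(5) by (simp add: power_mult_distrib)
  also have "\<dots> = (eps * G + S * Y^2 / eps)^2 - (eps * G - S * Y^2 / eps)^2"
    using assms(4) by (simp add: field_simps power2_eq_square)
  also have "\<dots> \<le> (eps * G + S * Y^2 / eps)^2"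
    by simp
  finally show ?thesis
    using assms by (intro power2_le_imp_le[of "2 * Z"]) auto
qed

lemma inv_knorm_lattice_sum_le:
  fixes C :: real and N :: nat
  assumes N: "N \<ge> 2" and C: "C \<ge> 0"
    and C_bound: "\<forall>M::nat. M \<ge> 2 \<longrightarrow>
        (\<Sum>k\<in>{k\<in>box M. 0 < knorm k \<and> knorm k \<le> real M}. 1 / (knorm k)\<^sup>2) \<le> C * ln (real M)"
  shows "(\<Sum>p\<in>box (2*N). (inv_knorm p)^2) \<le> 3 * (C * ln (real N))"
proof -
  let ?T = "{k\<in>box (3*N). 0 < knorm k \<and> knorm k \<le> real (3*N)}"
  have "(\<Sum>p\<in>box (2*N). (inv_knorm p)^2) = (\<Sum>p\<in>box (2*N) - {0}. 1 / (knorm p)^2)"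
    by (rule sum.mono_neutral_cong_right) (auto simp: finite_box inv_knorm_def power_one_over)
  also have "\<dots> \<le> (\<Sum>k\<in>?T. 1 / (knorm k)^2)"
  proof (rule sum_mono2)
    show "box (2*N) - {0} \<subseteq> ?T"
    proof
      fix p assume p: "p \<in> box (2*N) - {0}"
      have bound: "(real_of_int z)^2 \<le> (2 * real N)^2" if "\<bar>z\<bar> \<le> 2 * int N" for z
      proof -
        have "real_of_int \<bar>z\<bar> \<le> real_of_int (2 * int N)"
          using that by (simp only: of_int_le_iff)
        then have "\<bar>real_of_int z\<bar> \<le> \<bar>2 * real N\<bar>"
          by simp
        then show ?thesis
          by (simp only: abs_le_square_iff)
      qed
      have "\<bar>fst p\<bar> \<le> 2 * int N" "\<bar>snd p\<bar> \<le> 2 * int N"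
        using p by (auto simp: box_def)
      then have "(real_of_int (fst p))^2 \<le> (2 * real N)^2" "(real_of_int (snd p))^2 \<le> (2 * real N)^2"
        by (simp_all only: bound)
      then have "(knorm p)^2 \<le> (real (3*N))^2"
        unfolding knorm_power2 by (simp add: power_mult_distrib)
          (use zero_le_power2[of "real N"] in linarith)
      then have "knorm p \<le> real (3*N)"
        by (rule power2_le_imp_le) simp
      then show "p \<in> ?T"
        using p knorm_pos by (auto simp: box_def)
    qed
  qed (simp_all add: finite_box)
  also have "\<dots> \<le> C * ln (real (3*N))"
    using C_bound[rule_format, of "3 * N"] N by linarith
  also have "\<dots> \<le> 3 * (C * ln (real N))"
  proof -
    have "ln (real (3*N)) = ln 3 + ln (real N)"
      using N by (simp add: ln_mult)
    also have "ln 3 \<le> ln (real N ^ 2)"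
    proof (rule ln_mono)
      show "3 \<le> real N ^ 2"
        using N mult_mono[of 2 "real N" 2 "real N"] by (simp add: power2_eq_square)
    qed simp
    finally have "ln (real (3*N)) \<le> 3 * ln (real N)"
      using N by (simp add: ln_realpow)
    then show ?thesis
      using mult_left_mono[OF _ C] by (simp add: mult.left_commute)
  qed
  finally show ?thesis .
qed

definition weighted_enstrophy ::
  "nat \<Rightarrow> real \<Rightarrow> (real \<Rightarrow> int \<times> int \<Rightarrow> complex \<times> complex) \<Rightarrow> real \<Rightarrow> real" where
  "weighted_enstrophy N alpha uh t =
     (\<Sum>k\<in>box N. (exp (alpha * t * knorm k) * cmod (curl_coeff k (uh t k)))^2)"

lemma L2sq_exp_weighted_vorticity:
  "L2sq (exp_weighted_vorticity N alpha uh t) = 4*pi^2 * weighted_enstrophy N alpha uh t"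
  unfolding exp_weighted_vorticity_def L2sq_trigpoly weighted_enstrophy_def
  by (simp add: norm_mult)

lemma exp_weighted_vorticity_0: "exp_weighted_vorticity N alpha uh 0 = vorticity N uh 0"
  unfolding exp_weighted_vorticity_def vorticity_def by simp

lemma has_vector_derivative_curl_coeff:
  "(f has_vector_derivative f') F \<Longrightarrow>
    ((\<lambda>s. curl_coeff k (f s)) has_vector_derivative curl_coeff k f') F"
  by (rule bounded_linear.has_vector_derivative)
    (unfold curl_coeff_def, intro bounded_linear_intros bounded_linear_fst bounded_linear_snd)

lemma has_real_derivative_cmod_power2:
  assumes "(f has_vector_derivative f') (at t within S)"
  shows "((\<lambda>s. (cmod (f s))^2) has_real_derivative 2 * Re (cnj (f t) * f')) (at t within S)"
proof -
  have "((\<lambda>s. (Re (f s))^2 + (Im (f s))^2) has_real_derivative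
          2 * Re (f t) * Re f' + 2 * Im (f t) * Im f') (at t within S)"
    using assms by (auto intro!: derivative_eq_intros)
  then show ?thesis
    unfolding cmod_power2 by (simp add: algebra_simps)
qed

text \<open>Taking the curl removes the pressure gradient.\<close>
lemma curl_coeff_momentum:
  "curl_coeff k (- x - (\<i> * of_int (fst k) * p, \<i> * of_int (snd k) * p) + (c * fst y, c * snd y))
   = - curl_coeff k x + c * curl_coeff k y"
  by (simp add: curl_coeff_def algebra_simps)

lemma SV_vorticity_has_derivative:
  assumes sol: "SV_solution N eps Rh Kt u0 uh" and t: "t \<ge> 0" and k: "k \<in> box N"
  shows "((\<lambda>s. curl_coeff k (uh s k)) has_vector_derivative
      - curl_coeff k (convec N (uh t) k)
      + of_real (- eps * (knorm k)^2 * (1 - Rh k)) * curl_coeff k (uh t k)) (at t within {0..})"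
proof -
  obtain pr where "((\<lambda>s. uh s k) has_vector_derivative
          (- (if k \<in> box N then convec N (uh t) k else 0)
           - (\<i> * of_int (fst k) * pr t k, \<i> * of_int (snd k) * pr t k)
           + (of_real (- eps * (knorm k)\<^sup>2 * (1 - Rh k)) * fst (uh t k),
              of_real (- eps * (knorm k)\<^sup>2 * (1 - Rh k)) * snd (uh t k))))
        (at t within {0..})"
    using sol t unfolding SV_solution_def by blast
  from has_vector_derivative_curl_coeff[OF this, of k] show ?thesis
    using k by (simp only: if_True curl_coeff_momentum)
qed

lemma weighted_enstrophy_has_derivative:
  assumes sol: "SV_solution N eps Rh Kt u0 uh" and t: "t \<ge> 0"
  shows "(weighted_enstrophy N alpha uh has_real_derivative
      (\<Sum>k\<in>box N. (2 * alpha * knorm k - 2 * eps * (knorm k)^2 * (1 - Rh k))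
                     * (exp (alpha * t * knorm k) * cmod (curl_coeff k (uh t k)))^2)
      - 2 * Re (\<Sum>k\<in>box N. of_real ((exp (alpha * t * knorm k))^2) * cnj (curl_coeff k (uh t k))
                            * curl_coeff k (convec N (uh t) k))) (at t within {0..})"
proof -
  define e where "e s k = exp (alpha * s * knorm k)" for s k
  define \<omega> where "\<omega> s k = curl_coeff k (uh s k)" for s k
  define \<nu> where "\<nu> k = - eps * (knorm k)^2 * (1 - Rh k)" for k
  define NL where "NL k = of_real ((e t k)^2) * cnj (\<omega> t k) * curl_coeff k (convec N (uh t) k)" for k
  have "((\<lambda>s. (e s k)^2 * (cmod (\<omega> s k))^2) has_real_derivative
      (2 * alpha * knorm k - 2 * eps * (knorm k)^2 * (1 - Rh k)) * (e t k * cmod (\<omega> t k))^2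
        - 2 * Re (NL k)) (at t within {0..})" if k: "k \<in> box N" for k
  proof -
    have d1: "((\<lambda>s. (e s k)^2) has_real_derivative 2 * alpha * knorm k * (e t k)^2) (at t within {0..})"
      unfolding e_def by (auto intro!: derivative_eq_intros simp: power2_eq_square algebra_simps)
    have d2: "((\<lambda>s. (cmod (\<omega> s k))^2) has_real_derivative
        2 * Re (cnj (\<omega> t k) * (- curl_coeff k (convec N (uh t) k) + of_real (\<nu> k) * \<omega> t k)))
        (at t within {0..})"
      unfolding \<omega>_def \<nu>_def
      by (rule has_real_derivative_cmod_power2[OF SV_vorticity_has_derivative[OF sol t k]])
    have re: "Re (cnj z * (- w + of_real r * z)) = r * (cmod z)^2 - Re (cnj z * w)" for z w r
    proof -
      have "cnj z * (- w + of_real r * z) = of_real (r * (cmod z)^2) - cnj z * w"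
        by (simp only: of_real_mult complex_norm_square) (simp add: algebra_simps)
      then show ?thesis
        by simp
    qed
    have "((\<lambda>s. (e s k)^2 * (cmod (\<omega> s k))^2) has_real_derivative
        2 * alpha * knorm k * (e t k)^2 * (cmod (\<omega> t k))^2
        + (e t k)^2 * (2 * Re (cnj (\<omega> t k) * (- curl_coeff k (convec N (uh t) k) + of_real (\<nu> k) * \<omega> t k))))
        (at t within {0..})"
      by (rule DERIV_cong[OF DERIV_mult'[OF d1 d2]]) (simp add: algebra_simps)
    then show ?thesis
      by (rule DERIV_cong) (unfold re NL_def \<nu>_def, simp add: algebra_simps power_mult_distrib)
  qed
  then have "((\<lambda>s. \<Sum>k\<in>box N. (e s k)^2 * (cmod (\<omega> s k))^2) has_real_derivative
      (\<Sum>k\<in>box N. (2 * alpha * knorm k - 2 * eps * (knorm k)^2 * (1 - Rh k)) * (e t k * cmod (\<omega> t k))^2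
        - 2 * Re (NL k))) (at t within {0..})"
    by (rule DERIV_sum)
  moreover have "(\<lambda>s. \<Sum>k\<in>box N. (e s k)^2 * (cmod (\<omega> s k))^2) = weighted_enstrophy N alpha uh"
    by (simp add: weighted_enstrophy_def e_def \<omega>_def power_mult_distrib fun_eq_iff)
  ultimately show ?thesis
    by (simp add: sum_subtractf Re_sum sum_distrib_left NL_def e_def \<omega>_def)
qed

lemma weighted_enstrophy_riccati_inequality:
  assumes sol: "SV_solution N eps Rh Kt u0 uh"
    and eps: "eps > 0" and alpha: "alpha \<ge> 0" and t: "t \<ge> 0"
    and Rh_range: "\<forall>k. 0 \<le> Rh k \<and> Rh k \<le> 1"
    and Rh_high: "\<forall>k. knorm k > 2 * m \<longrightarrow> Rh k = 0"
    and N: "N \<ge> 2" and C: "C \<ge> 0"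
    and C_bound: "\<forall>M::nat. M \<ge> 2 \<longrightarrow>
        (\<Sum>k\<in>{k\<in>box M. 0 < knorm k \<and> knorm k \<le> real M}. 1 / (knorm k)\<^sup>2) \<le> C * ln (real M)"
  shows "\<exists>D. (weighted_enstrophy N alpha uh has_real_derivative D) (at t within {0..}) \<and>
    D \<le> (alpha^2 + 8 * eps^2 * m^2) / eps * weighted_enstrophy N alpha uh t
       + 3 * (C * ln (real N)) / eps * (weighted_enstrophy N alpha uh t)^2"
proof -
  define W where "W k = exp (alpha * t * knorm k) * cmod (curl_coeff k (uh t k))" for k
  define En where "En = weighted_enstrophy N alpha uh t"
  define NL where "NL = (\<Sum>k\<in>box N. of_real ((exp (alpha * t * knorm k))^2) * cnj (curl_coeff k (uh t k))
                            * curl_coeff k (convec N (uh t) k))"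
  define G where "G = (\<Sum>k\<in>box N. (knorm k)^2 * (W k)^2)"
  define S where "S = (\<Sum>p\<in>box (2*N). (inv_knorm p)^2)"
  have En: "En = (\<Sum>k\<in>box N. (W k)^2)" "En \<ge> 0"
    by (simp_all add: En_def W_def weighted_enstrophy_def sum_nonneg)
  have "(cmod NL)^2 \<le> En^2 * (G * S)"
    unfolding NL_def En G_def S_def W_def
    using sol t alpha by (intro nonlinear_term_bound) (auto simp: SV_solution_def)
  then have "2 * cmod NL \<le> eps * G + S * En^2 / eps"
    using eps En(2) by (intro two_mult_le_of_power2_le) (auto simp: G_def S_def sum_nonneg)
  moreover have "S * En^2 / eps \<le> 3 * (C * ln (real N)) / eps * En^2"
    using inv_knorm_lattice_sum_le[OF N C C_bound] eps
    by (simp add: S_def divide_right_mono mult_right_mono)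
  moreover have "(\<Sum>k\<in>box N. (2 * alpha * knorm k - 2 * eps * (knorm k)^2 * (1 - Rh k)) * (W k)^2)
      + eps * G \<le> (alpha^2 + 8 * eps^2 * m^2) / eps * En"
  proof -
    have "(\<Sum>k\<in>box N. (2 * alpha * knorm k - 2 * eps * (knorm k)^2 * (1 - Rh k)) * (W k)^2) + eps * G
        = (\<Sum>k\<in>box N. (2 * alpha * knorm k - 2 * eps * (knorm k)^2 * (1 - Rh k) + eps * (knorm k)^2)
                         * (W k)^2)"
      by (simp add: G_def sum_distrib_left sum.distrib[symmetric] algebra_simps)
    also have "\<dots> \<le> (\<Sum>k\<in>box N. (alpha^2 + 8 * eps^2 * m^2) / eps * (W k)^2)"
      using Rh_range Rh_high eps knorm_nonneg
      by (intro sum_mono mult_right_mono spectral_viscosity_rate_le) auto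
    finally show ?thesis
      by (simp add: En sum_distrib_left)
  qed
  moreover have "- (2 * Re NL) \<le> 2 * cmod NL"
    using complex_Re_le_cmod[of "- NL"] by simp
  ultimately show ?thesis
    using weighted_enstrophy_has_derivative[OF sol t, of alpha]
    unfolding En_def[symmetric] NL_def[symmetric] W_def[symmetric]
    by (intro exI[of _ "_ - 2 * Re NL"] conjI) auto
qed

lemma L2sq_exp_weighted_vorticity_riccati_inequality:
  assumes sol: "SV_solution N eps Rh Kt u0 uh"
    and eps: "eps > 0" and alpha: "alpha \<ge> 0" and t: "t \<ge> 0"
    and Rh_range: "\<forall>k. 0 \<le> Rh k \<and> Rh k \<le> 1"
    and Rh_high: "\<forall>k. knorm k > 2 * m \<longrightarrow> Rh k = 0"
    and N: "N \<ge> 2" and C: "C \<ge> 0"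
    and C_bound: "\<forall>M::nat. M \<ge> 2 \<longrightarrow>
        (\<Sum>k\<in>{k\<in>box M. 0 < knorm k \<and> knorm k \<le> real M}. 1 / (knorm k)\<^sup>2) \<le> C * ln (real M)"
  shows "\<exists>D. ((\<lambda>s. L2sq (exp_weighted_vorticity N alpha uh s)) has_real_derivative D) (at t within {0..}) \<and>
    D \<le> (alpha^2 + 8 * eps^2 * m^2) / eps * L2sq (exp_weighted_vorticity N alpha uh t)
       + C * ln (real N) / eps * (L2sq (exp_weighted_vorticity N alpha uh t))^2"
proof -
  define E where "E = weighted_enstrophy N alpha uh t"
  obtain D where der: "(weighted_enstrophy N alpha uh has_real_derivative D) (at t within {0..})"
    and le: "D \<le> (alpha^2 + 8 * eps^2 * m^2) / eps * E + 3 * (C * ln (real N)) / eps * E^2"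
    using weighted_enstrophy_riccati_inequality[OF assms] unfolding E_def by blast
  have "9 \<le> pi^2"
    using pi_gt3 power_mono[of 3 pi 2] by simp
  then have "3 * (C * ln (real N)) \<le> 4*pi^2 * (C * ln (real N))"
    using C N by (intro mult_right_mono) auto
  then have "3 * (C * ln (real N)) / eps * E^2 \<le> 4*pi^2 * (C * ln (real N)) / eps * E^2"
    using eps by (intro mult_right_mono[OF divide_right_mono]) auto
  with le have "4*pi^2 * D \<le> 4*pi^2 * ((alpha^2 + 8 * eps^2 * m^2) / eps * E
      + 4*pi^2 * (C * ln (real N)) / eps * E^2)"
    by (intro mult_left_mono) auto
  also have "\<dots> = (alpha^2 + 8 * eps^2 * m^2) / eps * (4*pi^2 * E)
      + C * ln (real N) / eps * (4*pi^2 * E)^2"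
    by (simp add: algebra_simps power2_eq_square)
  finally have "4*pi^2 * D \<le> \<dots>" .
  moreover have "((\<lambda>s. 4*pi^2 * weighted_enstrophy N alpha uh s) has_real_derivative 4*pi^2 * D)
      (at t within {0..})"
    using der by (rule DERIV_cmult)
  ultimately show ?thesis
    unfolding L2sq_exp_weighted_vorticity E_def by blast
qed

theorem mainTheorem3:
  fixes N a :: nat and eps m alpha C :: real
    and Rh :: "int \<times> int \<Rightarrow> real" and Kt :: "int \<times> int \<Rightarrow> complex"
    and u0 :: "real \<times> real \<Rightarrow> real \<times> real"
    and uh :: "real \<Rightarrow> int \<times> int \<Rightarrow> complex \<times> complex"
  assumes N: "N \<ge> 2"
    and eps: "eps > 0" and m: "m > 0" and a: "1 \<le> a" "a \<le> N"
    and Rh_range: "\<forall>k. 0 \<le> Rh k \<and> Rh k \<le> 1"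
    and Rh_low: "\<forall>k. knorm k \<le> m \<longrightarrow> Rh k = 1"
    and Rh_high: "\<forall>k. knorm k > 2 * m \<longrightarrow> Rh k = 0"
    and Kt_supp: "\<forall>k. \<not> (kinf k \<le> int a) \<longrightarrow> Kt k = 0"
    and Kt_bd: "\<forall>k. cmod (Kt k) \<le> 1"
    and u0: "admissible_initial u0"
    and sol: "SV_solution N eps Rh Kt u0 uh"
    and C: "C > 0"
    and C_bound: "\<forall>M::nat. M \<ge> 2 \<longrightarrow>
        (\<Sum>k\<in>{k\<in>box M. 0 < knorm k \<and> knorm k \<le> real M}. 1 / (knorm k)\<^sup>2) \<le> C * ln (real M)"
    and alpha: "alpha > 0"
  shows "let beta = alpha\<^sup>2 + 8 * eps\<^sup>2 * m\<^sup>2;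
             gamma = C * ln (real N);
             W0 = L2sq (vorticity N uh 0);
             tstar = eps / beta * ln (1 + beta / (gamma * W0))
         in \<forall>t. 0 \<le> t \<and> (W0 = 0 \<or> t < tstar) \<longrightarrow>
              L2sq (exp_weighted_vorticity N alpha uh t)
                \<le> W0 * exp (beta * t / eps) /
                   (1 - gamma * W0 / beta * (exp (beta * t / eps) - 1))"
proof -
  \<comment> \<open>Only the evolution equation, the viscosity above 2m and the lattice sum bound enter.\<close>
  define beta where "beta = alpha^2 + 8 * eps^2 * m^2"
  define gamma where "gamma = C * ln (real N)"
  define E where "E s = L2sq (exp_weighted_vorticity N alpha uh s)" for s
  have beta: "beta > 0" and gamma: "gamma > 0"
    using alpha C N by (simp_all add: beta_def gamma_def add_pos_nonneg)
  have E0: "E 0 = L2sq (vorticity N uh 0)"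
    by (simp add: E_def exp_weighted_vorticity_0)
  have "E t \<le> E 0 * exp (beta / eps * t) / (1 - gamma / eps / (beta / eps) * E 0 * (exp (beta / eps * t) - 1))"
    if t: "0 \<le> t" and before: "E 0 = 0 \<or> t < eps / beta * ln (1 + beta / (gamma * E 0))" for t
  proof (rule riccati_bound)
    show "\<exists>D. (E has_real_derivative D) (at s within {0..}) \<and>
        D \<le> beta / eps * E s + gamma / eps * (E s)^2" if "s \<ge> 0" for s
      using L2sq_exp_weighted_vorticity_riccati_inequality[OF sol eps _ that Rh_range Rh_high N _ C_bound]
        alpha C unfolding E_def[abs_def] beta_def gamma_def by simp
    show "E 0 = 0 \<or> t < ln (1 + beta / eps / (gamma / eps * E 0)) / (beta / eps)"
      using before eps by (simp add: field_simps)
  qed (use t eps beta gamma in \<open>simp_all add: E_def L2sq_exp_weighted_vorticity weighted_enstrophy_def sum_nonneg\<close>)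
  then show ?thesis
    using eps unfolding Let_def beta_def[symmetric] gamma_def[symmetric] E0[symmetric]
    by (simp add: E_def field_simps)
qed

end
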